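(* Let $\mathcal{X}$ be a countable set and $\mathcal{D}$ a distribution on $\mathcal{X}\times\{0,1\}$. Fix any two models $f_1,f_2:\mathcal{X}\to[0,1]$ and any $\epsilon>0$. If $\mu(U_\epsilon(f_1,f_2))=\alpha$, then for some $\bullet\in\{>,<\}$ and some $i\in\{1,2\}$, $$\mu(U^\bullet_\epsilon(f_1,f_2))\cdot\big(v_*^\bullet-v_i^\bullet\big)^2\ge\frac{\alpha\epsilon^2}{8},$$ where $v_*^\bullet=\mathbb{E}_{(x,y)\sim\mathcal{D}}[y\mid x\in U^\bullet_\epsilon(f_1,f_2)]$ and $v_i^\bullet=\mathbb{E}_{(x,y)\sim\mathcal{D}}[f_i(x)\mid x\in U^\bullet_\epsilon(f_1,f_2)]$.
   Context: For a set $S\subseteq\mathcal{X}$, $\mu(S)=\Pr_{(x,y)\sim\mathcal{D}}[x\in S]$. $U_\epsilon(f_1,f_2)=\{x:|f_1(x)-f_2(x)|>\epsilon\}$, $U^>_\epsilon(f_1,f_2)=\{x\in U_\epsilon(f_1,f_2):f_1(x)>f_2(x)\}$, $U^<_\epsilon(f_1,f_2)=\{x\in U_\epsilon(f_1,f_2):f_1(x)<f_2(x)\}$. When a set has mass zero the product $\mu(\cdot)\cdot(\cdot)^2$ is taken to be $0$. *)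

theory Defs
  imports "HOL-Probability.Probability"
begin

text \<open>The distribution D is a pmf on X \<times> {0,1}; the label y is a bool, read as 0/1.\<close>

definition mu :: "('a \<times> bool) pmf \<Rightarrow> 'a set \<Rightarrow> real" where
  "mu D S = measure_pmf.prob D {p. fst p \<in> S}"

text \<open>Conditional expectation E[g(x,y) | x \<in> S]; arbitrary (0) when mu S = 0.\<close>
definition cond_exp :: "('a \<times> bool) pmf \<Rightarrow> 'a set \<Rightarrow> ('a \<times> bool \<Rightarrow> real) \<Rightarrow> real" where
  "cond_exp D S g = (if mu D S = 0 then 0
     else measure_pmf.expectation D (\<lambda>p. indicator S (fst p) * g p) / mu D S)"

definition U :: "real \<Rightarrow> ('a \<Rightarrow> real) \<Rightarrow> ('a \<Rightarrow> real) \<Rightarrow> 'a set" where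
  "U eps f1 f2 = {x. \<bar>f1 x - f2 x\<bar> > eps}"

definition U_gt :: "real \<Rightarrow> ('a \<Rightarrow> real) \<Rightarrow> ('a \<Rightarrow> real) \<Rightarrow> 'a set" where
  "U_gt eps f1 f2 = {x \<in> U eps f1 f2. f1 x > f2 x}"

definition U_lt :: "real \<Rightarrow> ('a \<Rightarrow> real) \<Rightarrow> ('a \<Rightarrow> real) \<Rightarrow> 'a set" where
  "U_lt eps f1 f2 = {x \<in> U eps f1 f2. f1 x < f2 x}"

text \<open>mu(S) * (v_* - v_f)^2 with v_* = E[y | x\<in>S], v_f = E[f(x) | x\<in>S]; taken to be 0 when mu(S) = 0.\<close>
definition gap_term :: "('a \<times> bool) pmf \<Rightarrow> 'a set \<Rightarrow> ('a \<Rightarrow> real) \<Rightarrow> real" where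
  "gap_term D S f = (if mu D S = 0 then 0 else
     mu D S * (cond_exp D S (\<lambda>p. of_bool (snd p)) - cond_exp D S (\<lambda>p. f (fst p)))\<^sup>2)"

end

theory Submission
  imports Defs
begin

text \<open>On U^> the model f1 exceeds f2 by more than eps, hence so do their conditional expectations,
  and the conditional mean label is at distance at least eps/2 from one of them; symmetrically on U^<.
  Since U^> and U^< partition U, one of them has mass at least alpha/2, which gives
  (alpha/2) * (eps/2)^2 = alpha eps^2/8.\<close>

lemma mu_nonneg: "0 \<le> mu D S"
  by (simp add: mu_def)

lemma mu_Un_disjoint:
  assumes "A \<inter> B = {}"
  shows "mu D (A \<union> B) = mu D A + mu D B"
proof -
  have fst_Un: "{p. fst p \<in> A \<union> B} = {p. fst p \<in> A} \<union> {p. fst p \<in> B}"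
    by auto
  show ?thesis
    unfolding mu_def fst_Un by (rule measure_pmf.finite_measure_Union) (use assms in auto)
qed

lemma expectation_indicator_fst:
  "measure_pmf.expectation D (\<lambda>p. indicator S (fst p) :: real) = mu D S"
proof -
  have indicator_fst: "(\<lambda>p. indicator S (fst p) :: real) = indicator {p. fst p \<in> S}"
    by (auto simp: indicator_def)
  show ?thesis
    unfolding indicator_fst mu_def Bochner_Integration.integral_indicator by simp
qed

lemma integrable_indicator_fst_mult:
  fixes g :: "'a \<times> bool \<Rightarrow> real"
  assumes "\<And>p. \<bar>g p\<bar> \<le> B"
  shows "integrable (measure_pmf D) (\<lambda>p. indicator S (fst p) * g p)"
proof -
  have "0 \<le> B"
    using abs_ge_zero assms order_trans by blast
  with assms show ?thesis
    by (intro measure_pmf.integrable_const_bound[where B = B]) (auto simp: indicator_def)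
qed

lemma cond_exp_diff:
  fixes g h :: "'a \<times> bool \<Rightarrow> real"
  assumes "integrable (measure_pmf D) (\<lambda>p. indicator S (fst p) * g p)"
    and "integrable (measure_pmf D) (\<lambda>p. indicator S (fst p) * h p)"
  shows "cond_exp D S (\<lambda>p. g p - h p) = cond_exp D S g - cond_exp D S h"
  using assms by (simp add: cond_exp_def right_diff_distrib diff_divide_distrib)

lemma cond_exp_ge:
  fixes g :: "'a \<times> bool \<Rightarrow> real"
  assumes "0 < mu D S"
    and "integrable (measure_pmf D) (\<lambda>p. indicator S (fst p) * g p)"
    and "\<And>p. fst p \<in> S \<Longrightarrow> c \<le> g p"
  shows "c \<le> cond_exp D S g"
proof -
  have "c * mu D S = measure_pmf.expectation D (\<lambda>p. indicator S (fst p)) * c"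
    by (simp only: expectation_indicator_fst mult.commute)
  also have "\<dots> = measure_pmf.expectation D (\<lambda>p. indicator S (fst p) * c)"
    by (rule integral_mult_left_zero[symmetric])
  also have "\<dots> \<le> measure_pmf.expectation D (\<lambda>p. indicator S (fst p) * g p)"
    using assms(2,3) integrable_indicator_fst_mult[of "\<lambda>_. c" "\<bar>c\<bar>" D S]
    by (intro integral_mono) (auto simp: indicator_def)
  finally show ?thesis
    using assms(1) by (simp add: cond_exp_def le_divide_eq)
qed

lemma power2_diff_ge_quarter_gap:
  fixes a b1 b2 e :: real
  assumes "e \<le> b1 - b2" and "0 \<le> e"
  shows "e\<^sup>2 / 4 \<le> (a - b1)\<^sup>2 \<or> e\<^sup>2 / 4 \<le> (a - b2)\<^sup>2"
proof -
  have "e / 2 \<le> \<bar>a - b\<bar> \<Longrightarrow> e\<^sup>2 / 4 \<le> (a - b)\<^sup>2" for b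
    using power_mono[of "e / 2" "\<bar>a - b\<bar>" 2] assms(2) by (simp add: power_divide)
  moreover have "e / 2 \<le> \<bar>a - b1\<bar> \<or> e / 2 \<le> \<bar>a - b2\<bar>"
    using assms(1) by linarith
  ultimately show ?thesis
    by blast
qed

lemma mu_U_eq_add:
  assumes "0 \<le> eps"
  shows "mu D (U eps f1 f2) = mu D (U_gt eps f1 f2) + mu D (U_lt eps f1 f2)"
proof -
  have "U eps f1 f2 = U_gt eps f1 f2 \<union> U_lt eps f1 f2"
    using assms by (auto simp: U_def U_gt_def U_lt_def abs_if)
  moreover have "U_gt eps f1 f2 \<inter> U_lt eps f1 f2 = {}"
    by (auto simp: U_gt_def U_lt_def)
  ultimately show ?thesis
    by (simp add: mu_Un_disjoint)
qed

lemma exists_gap_term_ge: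
  fixes g h :: "'a \<Rightarrow> real"
  assumes gap: "\<And>x. x \<in> S \<Longrightarrow> h x + c \<le> g x"
    and "0 \<le> c"
    and g_bound: "\<And>x. \<bar>g x\<bar> \<le> B" and h_bound: "\<And>x. \<bar>h x\<bar> \<le> B"
  shows "\<exists>f \<in> {g, h}. mu D S * c\<^sup>2 / 4 \<le> gap_term D S f"
proof (cases "mu D S = 0")
  case True
  then show ?thesis
    by (intro bexI[of _ g]) (simp_all add: gap_term_def)
next
  case False
  then have mu_pos: "0 < mu D S"
    using mu_nonneg[of D S] by linarith
  let ?v = "\<lambda>f. cond_exp D S (\<lambda>p. f (fst p))"
  let ?v_label = "cond_exp D S (\<lambda>p. of_bool (snd p))"
  have "\<bar>g x - h x\<bar> \<le> 2 * B" for x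
    using abs_triangle_ineq4[of "g x" "h x"] g_bound[of x] h_bound[of x] by linarith
  moreover have "c \<le> g x - h x" if "x \<in> S" for x
    using gap[OF that] by linarith
  ultimately have "c \<le> cond_exp D S (\<lambda>p. g (fst p) - h (fst p))"
    by (intro cond_exp_ge mu_pos integrable_indicator_fst_mult[where B = "2 * B"]) auto
  also have "\<dots> = ?v g - ?v h"
    using g_bound h_bound by (intro cond_exp_diff integrable_indicator_fst_mult) auto
  finally obtain f where f: "f \<in> {g, h}" and "c\<^sup>2 / 4 \<le> (?v_label - ?v f)\<^sup>2"
    using power2_diff_ge_quarter_gap[of c _ _ ?v_label] \<open>0 \<le> c\<close> by blast
  then have "mu D S * (c\<^sup>2 / 4) \<le> gap_term D S f"
    using False mu_pos by (simp add: gap_term_def mult_left_mono)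
  with f show ?thesis
    by auto
qed

theorem lemma2:
  fixes D :: "('a::countable \<times> bool) pmf"
    and f1 f2 :: "'a \<Rightarrow> real"
    and eps alpha :: real
  assumes f1_range: "\<And>x. f1 x \<in> {0..1}"
    and f2_range: "\<And>x. f2 x \<in> {0..1}"
    and eps_pos: "eps > 0"
    and alpha_def: "mu D (U eps f1 f2) = alpha"
  shows "\<exists>S \<in> {U_gt eps f1 f2, U_lt eps f1 f2}. \<exists>f \<in> {f1, f2}.
           gap_term D S f \<ge> alpha * eps\<^sup>2 / 8"
proof -
  have f1_bound: "\<And>x. \<bar>f1 x\<bar> \<le> 1" and f2_bound: "\<And>x. \<bar>f2 x\<bar> \<le> 1"
    using f1_range f2_range by (auto simp: abs_le_iff)
  have alpha_split: "alpha = mu D (U_gt eps f1 f2) + mu D (U_lt eps f1 f2)"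
    using mu_U_eq_add eps_pos alpha_def by (metis less_imp_le)
  have gt: "\<exists>f \<in> {f1, f2}. mu D (U_gt eps f1 f2) * eps\<^sup>2 / 4 \<le> gap_term D (U_gt eps f1 f2) f"
    using eps_pos f1_bound f2_bound
    by (intro exists_gap_term_ge) (auto simp: U_gt_def U_def)
  have "\<exists>f \<in> {f2, f1}. mu D (U_lt eps f1 f2) * eps\<^sup>2 / 4 \<le> gap_term D (U_lt eps f1 f2) f"
    using eps_pos f1_bound f2_bound
    by (intro exists_gap_term_ge) (auto simp: U_lt_def U_def)
  then have lt: "\<exists>f \<in> {f1, f2}. mu D (U_lt eps f1 f2) * eps\<^sup>2 / 4 \<le> gap_term D (U_lt eps f1 f2) f"
    by (simp add: insert_commute)
  have "alpha * eps\<^sup>2 / 8 \<le> mu D S * eps\<^sup>2 / 4" if "alpha / 2 \<le> mu D S" for S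
    using mult_right_mono[OF that, of "eps\<^sup>2 / 4"] by simp
  moreover have "alpha / 2 \<le> mu D (U_gt eps f1 f2) \<or> alpha / 2 \<le> mu D (U_lt eps f1 f2)"
    using alpha_split by linarith
  ultimately show ?thesis
    using gt lt by (meson insertCI order_trans)
qed

end
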